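(* Let $A$ be a bounded linear operator on a complex Hilbert space $\mathcal{H}$ whose numerical range $W(A) = \{\langle Ax, x\rangle : x \in \mathcal{H}, \|x\| = 1\}$ is elliptical, i.e. (up to closure) $W(A)$ is a region in $\mathbb{C}$ bounded by an ellipse. Then \[ \|A^*A - AA^*\| \le \frac{4}{\pi}\, S(W(A)), \] where $S(W(A))$ denotes the area (planar Lebesgue measure) of $W(A)$. *)

theory Defs
  imports "HOL-Analysis.Analysis"
begin

text \<open>Complex inner product spaces (not available in the distribution):
  a real normed vector space with a complex scalar multiplication extending the
  real one and an inner product, linear in the first argument and conjugate
  symmetric, inducing the norm. A complex Hilbert space is such a space that is
  moreover complete (sort complete_space).\<close>

class complex_inner_space = real_normed_vector +
  fixes scaleC :: "complex \<Rightarrow> 'a \<Rightarrow> 'a"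
    and cinner :: "'a \<Rightarrow> 'a \<Rightarrow> complex"
  assumes scaleC_add_right: "scaleC c (x + y) = scaleC c x + scaleC c y"
    and scaleC_add_left: "scaleC (c + d) x = scaleC c x + scaleC d x"
    and scaleC_scaleC: "scaleC c (scaleC d x) = scaleC (c * d) x"
    and scaleC_one: "scaleC 1 x = x"
    and scaleC_of_real: "scaleC (complex_of_real r) x = scaleR r x"
    and cinner_add_left: "cinner (x + y) z = cinner x z + cinner y z"
    and cinner_scaleC_left: "cinner (scaleC c x) y = c * cinner x y"
    and cinner_commute: "cinner y x = cnj (cinner x y)"
    and cinner_self_norm: "cinner x x = complex_of_real ((norm x)\<^sup>2)"

definition clinear :: "('a::complex_inner_space \<Rightarrow> 'b::complex_inner_space) \<Rightarrow> bool" where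
  "clinear A \<longleftrightarrow> (\<forall>x y. A (x + y) = A x + A y) \<and> (\<forall>c x. A (scaleC c x) = scaleC c (A x))"

definition bounded_clinear :: "('a::complex_inner_space \<Rightarrow> 'b::complex_inner_space) \<Rightarrow> bool" where
  "bounded_clinear A \<longleftrightarrow> clinear A \<and> (\<exists>K. \<forall>x. norm (A x) \<le> norm x * K)"

definition is_adjoint :: "('a::complex_inner_space \<Rightarrow> 'a) \<Rightarrow> ('a \<Rightarrow> 'a) \<Rightarrow> bool" where
  "is_adjoint A B \<longleftrightarrow> (\<forall>x y. cinner (A x) y = cinner x (B y))"

definition numerical_range :: "('a::complex_inner_space \<Rightarrow> 'a) \<Rightarrow> complex set" where
  "numerical_range A = {cinner (A x) x | x. norm x = 1}"

definition elliptical_disc :: "complex \<Rightarrow> complex \<Rightarrow> real \<Rightarrow> complex set" where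
  "elliptical_disc f1 f2 a = {z. cmod (z - f1) + cmod (z - f2) \<le> 2 * a}"

definition elliptical :: "complex set \<Rightarrow> bool" where
  "elliptical W \<longleftrightarrow> (\<exists>f1 f2 a. cmod (f1 - f2) < 2 * a \<and> closure W = elliptical_disc f1 f2 a)"

end

theory Submission
  imports Defs
begin

text \<open>
  Let the closure of \<open>W(A)\<close> be the ellipse with centre \<open>m\<close>, semi-axes \<open>a \<ge> b\<close> and major axis in
  direction \<open>\<omega>\<close>. The operator \<open>B = cnj \<omega> (A - m)\<close> has the same self-commutator as \<open>A\<close>, and its
  numerical range lies in the rectangle \<open>|Re z| \<le> a, |Im z| \<le> b\<close>. Writing \<open>B = H + iK\<close> with
  \<open>H, K\<close> self-adjoint, the numerical ranges of \<open>H\<close> and \<open>K\<close> lie in \<open>[-a, a]\<close> and \<open>[-b, b]\<close>,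
  so \<open>\<parallel>H\<parallel> \<le> a\<close> and \<open>\<parallel>K\<parallel> \<le> b\<close>; since \<open>B*B - BB* = 2i(HK - KH)\<close>, the self-commutator has
  norm at most \<open>4ab\<close>. On the other hand \<open>W(A)\<close> is convex (Toeplitz-Hausdorff), so it contains the
  interior of its closure, the open elliptical region of area \<open>\<pi>ab\<close>.
\<close>

section \<open>Complex inner product spaces\<close>

lemma scaleC_zero_right [simp]: "scaleC c (0::'a::complex_inner_space) = 0"
  using scaleC_add_right [of c 0 0] by simp

lemma scaleC_minus_right: "scaleC c (- x::'a::complex_inner_space) = - scaleC c x"
  by (simp add: eq_neg_iff_add_eq_0 flip: scaleC_add_right)

lemma scaleC_diff_right: "scaleC c (x - y::'a::complex_inner_space) = scaleC c x - scaleC c y"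
  by (simp only: diff_conv_add_uminus scaleC_add_right scaleC_minus_right)

lemma cinner_zero_left [simp]: "cinner 0 (y::'a::complex_inner_space) = 0"
  using cinner_add_left [of 0 0 y] by simp

lemma cinner_zero_right [simp]: "cinner x (0::'a::complex_inner_space) = 0"
  by (subst cinner_commute) simp

lemma cinner_add_right: "cinner x (y + z::'a::complex_inner_space) = cinner x y + cinner x z"
  by (subst (1 2 3) cinner_commute) (simp add: cinner_add_left)

lemma cinner_scaleC_right: "cinner x (scaleC c y::'a::complex_inner_space) = cnj c * cinner x y"
  by (subst (1 2) cinner_commute) (simp add: cinner_scaleC_left)

lemma cinner_minus_left: "cinner (- x) (y::'a::complex_inner_space) = - cinner x y"
  by (simp add: eq_neg_iff_add_eq_0 flip: cinner_add_left)

lemma cinner_minus_right: "cinner x (- y::'a::complex_inner_space) = - cinner x y"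
  by (subst (1 2) cinner_commute) (simp add: cinner_minus_left)

lemma cinner_diff_left: "cinner (x - y) (z::'a::complex_inner_space) = cinner x z - cinner y z"
  by (simp only: diff_conv_add_uminus cinner_add_left cinner_minus_left)

lemma cinner_diff_right: "cinner x (y - z::'a::complex_inner_space) = cinner x y - cinner x z"
  by (simp only: diff_conv_add_uminus cinner_add_right cinner_minus_right)

lemma cinner_scaleR_left: "cinner (scaleR r x) (y::'a::complex_inner_space) = of_real r * cinner x y"
  by (simp add: cinner_scaleC_left flip: scaleC_of_real)

lemma cinner_scaleR_right: "cinner x (scaleR r y::'a::complex_inner_space) = of_real r * cinner x y"
  by (simp add: cinner_scaleC_right flip: scaleC_of_real)

lemma Re_cinner_self: "Re (cinner x (x::'a::complex_inner_space)) = (norm x)\<^sup>2"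
  by (simp add: cinner_self_norm)

lemma cinner_self_eq_1: "norm (x::'a::complex_inner_space) = 1 \<Longrightarrow> cinner x x = 1"
  by (simp add: cinner_self_norm)

lemma cinner_eq_zero_left: "(\<And>y. cinner x y = 0) \<Longrightarrow> (x::'a::complex_inner_space) = 0"
  by (metis cinner_self_norm norm_eq_zero of_real_eq_0_iff zero_eq_power2)

lemma norm_scaleC: "norm (scaleC c (x::'a::complex_inner_space)) = cmod c * norm x"
proof -
  have "(norm (scaleC c x))\<^sup>2 = Re (c * cnj c * cinner x x)"
    unfolding Re_cinner_self [symmetric] cinner_scaleC_left cinner_scaleC_right
    by (metis mult.left_commute mult.assoc)
  also have "\<dots> = (cmod c * norm x)\<^sup>2"
    by (simp add: cinner_self_norm complex_mult_cnj power_mult_distrib cmod_power2 del: of_real_power)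
  finally show ?thesis
    by (simp add: power2_eq_iff_nonneg)
qed

lemma Re_cinner_le: "Re (cinner x y) \<le> norm x * norm (y::'a::complex_inner_space)"
proof -
  define s t where "s = norm y" and "t = norm x"
  have "Re (cinner y x) = Re (cinner x y)"
    by (subst cinner_commute) simp
  moreover have "0 \<le> Re (cinner (s *\<^sub>R x - t *\<^sub>R y) (s *\<^sub>R x - t *\<^sub>R y))"
    by (simp add: Re_cinner_self)
  ultimately have "2 * (s * t) * Re (cinner x y) \<le> 2 * (s * t) * (s * t)"
    by (simp add: cinner_diff_left cinner_diff_right cinner_scaleR_left cinner_scaleR_right
        Re_cinner_self s_def t_def power2_eq_square algebra_simps)
  then show ?thesis
    by (cases "s * t = 0") (auto simp: s_def t_def mult.commute)
qed

lemma cis_minus_Arg_mult: "cis (- Arg z) * z = of_real (cmod z)"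
proof -
  have "cis (- Arg z) * z = cis (- Arg z) * rcis (cmod z) (Arg z)"
    by (simp add: rcis_cmod_Arg)
  also have "\<dots> = of_real (cmod z)"
    by (simp add: rcis_def mult.left_commute cis_mult)
  finally show ?thesis .
qed

lemma cinner_cauchy_schwarz: "cmod (cinner x y) \<le> norm x * norm (y::'a::complex_inner_space)"
proof -
  define \<mu> where "\<mu> = cis (Arg (cinner x y))"
  have "cmod (cinner x y) = Re (cinner x (scaleC \<mu> y))"
    by (simp add: cinner_scaleC_right \<mu>_def cis_cnj cis_minus_Arg_mult)
  also have "\<dots> \<le> norm x * norm y"
    using Re_cinner_le [of x "scaleC \<mu> y"] by (simp add: norm_scaleC \<mu>_def)
  finally show ?thesis .
qed

lemma cinner_scaleC_unit:
  assumes "cmod c = 1"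
  shows "cinner (scaleC c x) (scaleC c y) = cinner x (y::'a::complex_inner_space)"
proof -
  have "cnj c * c = 1"
    using complex_norm_square [of c] assms by (simp add: mult.commute)
  then show ?thesis
    by (simp add: cinner_scaleC_left cinner_scaleC_right mult.assoc [symmetric])
qed

lemma norm_le_if_cinner_le:
  fixes u :: "'a::complex_inner_space"
  assumes "0 \<le> K" and "\<And>y. cmod (cinner u y) \<le> K * norm y"
  shows "norm u \<le> K"
proof -
  have "norm u * norm u \<le> K * norm u"
    using assms(2) [of u] complex_Re_le_cmod [of "cinner u u"]
    by (simp add: Re_cinner_self power2_eq_square)
  then show ?thesis
    using assms(1) by (cases "u = 0") (simp_all add: mult_le_cancel_right_pos)
qed

section \<open>Linear operators and adjoints\<close>

lemma clinear_add: "clinear A \<Longrightarrow> A (x + y) = A x + A y"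
  and clinear_scaleC: "clinear A \<Longrightarrow> A (scaleC c x) = scaleC c (A x)"
  by (simp_all add: clinear_def)

lemma clinear_diff: "clinear A \<Longrightarrow> A (x - y) = A x - A y"
  using clinear_add [of A "x - y" y] by (simp add: eq_diff_eq)

lemma clinear_zero: "clinear A \<Longrightarrow> A 0 = 0"
  using clinear_add [of A 0 0] by simp

lemma clinear_scaleR: "clinear A \<Longrightarrow> A (r *\<^sub>R x) = r *\<^sub>R A x"
  by (simp add: clinear_scaleC flip: scaleC_of_real)

lemma is_adjoint_sym: "is_adjoint A B \<Longrightarrow> is_adjoint B A"
  unfolding is_adjoint_def by (metis cinner_commute)

lemma is_adjoint_clinear:
  assumes "is_adjoint A B"
  shows "clinear B"
proof -
  have adj: "cinner (B x) z = cinner x (A z)" for x z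
    using is_adjoint_sym [OF assms] by (simp add: is_adjoint_def)
  have "B (x + y) = B x + B y" for x y
    by (rule eq_iff_diff_eq_0 [THEN iffD2], rule cinner_eq_zero_left)
      (simp add: cinner_diff_left cinner_add_left adj)
  moreover have "B (scaleC c x) = scaleC c (B x)" for c x
    by (rule eq_iff_diff_eq_0 [THEN iffD2], rule cinner_eq_zero_left)
      (simp add: cinner_diff_left cinner_scaleC_left adj)
  ultimately show ?thesis
    by (simp add: clinear_def)
qed

lemma cinner_commutator:
  assumes "is_adjoint B Bs"
  shows "cinner (Bs (B x) - B (Bs x)) y = cinner (B x) (B y) - cinner (Bs x) (Bs y)"
  using assms is_adjoint_sym [OF assms] by (simp add: is_adjoint_def cinner_diff_left)

lemma clinear_scaleC_sub:
  assumes "clinear A"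
  shows "clinear (\<lambda>x. scaleC \<alpha> (A x - scaleC \<beta> x))"
  using assms by (simp add: clinear_def scaleC_add_right scaleC_diff_right scaleC_scaleC mult.commute)

lemma is_adjoint_scaleC_sub:
  assumes "is_adjoint A B"
  shows "is_adjoint (\<lambda>x. scaleC \<alpha> (A x - scaleC \<beta> x)) (\<lambda>x. scaleC (cnj \<alpha>) (B x - scaleC (cnj \<beta>) x))"
  using assms
  by (simp add: is_adjoint_def cinner_scaleC_left cinner_scaleC_right cinner_diff_left cinner_diff_right)

lemma commutator_scaleC_sub:
  fixes A As :: "'a::complex_inner_space \<Rightarrow> 'a" and \<alpha> \<beta> :: complex
  assumes adj: "is_adjoint A As" and "cmod \<alpha> = 1"
  defines "B \<equiv> \<lambda>x. scaleC \<alpha> (A x - scaleC \<beta> x)"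
    and "Bs \<equiv> \<lambda>x. scaleC (cnj \<alpha>) (As x - scaleC (cnj \<beta>) x)"
  shows "Bs (B x) - B (Bs x) = As (A x) - A (As x)"
proof (rule eq_iff_diff_eq_0 [THEN iffD2], rule cinner_eq_zero_left)
  fix y
  have adj_B: "is_adjoint B Bs"
    unfolding B_def Bs_def using adj by (rule is_adjoint_scaleC_sub)
  have "cinner (As u) v = cinner u (A v)" "cinner u (As v) = cinner (A u) v" for u v
    using adj is_adjoint_sym [OF adj] by (simp_all add: is_adjoint_def)
  moreover have "cmod (cnj \<alpha>) = 1"
    using \<open>cmod \<alpha> = 1\<close> by simp
  ultimately have
    "(cinner (B x) (B y) - cinner (Bs x) (Bs y)) - (cinner (A x) (A y) - cinner (As x) (As y)) = 0"
    unfolding B_def Bs_def cinner_scaleC_unit [OF \<open>cmod \<alpha> = 1\<close>]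
      cinner_scaleC_unit [OF \<open>cmod (cnj \<alpha>) = 1\<close>]
    using is_adjoint_clinear [OF is_adjoint_sym [OF adj]]
    by (simp add: clinear_diff clinear_scaleC cinner_diff_left cinner_diff_right cinner_scaleC_left
        cinner_scaleC_right algebra_simps)
  then show "cinner (Bs (B x) - B (Bs x) - (As (A x) - A (As x))) y = 0"
    by (simp only: cinner_diff_left [of "Bs (B x) - B (Bs x)"] cinner_commutator [OF adj_B]
        cinner_commutator [OF adj])
qed

section \<open>The numerical range\<close>

lemma numerical_range_scaleC_sub:
  "numerical_range (\<lambda>x. scaleC \<alpha> (A x - scaleC \<beta> x)) = (\<lambda>z. \<alpha> * (z - \<beta>)) ` numerical_range A"
proof -
  have "cinner (scaleC \<alpha> (A x - scaleC \<beta> x)) x = \<alpha> * (cinner (A x) x - \<beta>)" if "norm x = 1" for x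
    using that by (simp add: cinner_scaleC_left cinner_diff_left cinner_self_eq_1)
  then show ?thesis
    unfolding numerical_range_def by (auto simp: image_def) metis
qed

lemma cinner_self_in_numerical_range:
  assumes "clinear A" and "x \<noteq> 0"
  obtains z where "z \<in> numerical_range A" and "cinner (A x) x = of_real ((norm x)\<^sup>2) * z"
proof
  define u where "u = scaleR (1 / norm x) x"
  have "A u = scaleR (1 / norm x) (A x)"
    by (simp add: u_def clinear_scaleR [OF assms(1)])
  then show "cinner (A x) x = of_real ((norm x)\<^sup>2) * cinner (A u) u"
    using assms(2) by (simp add: u_def cinner_scaleR_left cinner_scaleR_right power2_eq_square)
  show "cinner (A u) u \<in> numerical_range A"
    using assms(2) by (auto simp: numerical_range_def u_def)
qed

lemma combination_neq_zero_of_isotropic: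
  fixes T :: "'a::complex_inner_space \<Rightarrow> 'a"
  assumes T: "clinear T" and "x \<noteq> 0" "cinner (T x) x = 0" "cinner (T y) y \<noteq> 0"
  shows "(1 - r) *\<^sub>R x + r *\<^sub>R y \<noteq> 0"
proof
  assume v: "(1 - r) *\<^sub>R x + r *\<^sub>R y = 0"
  with \<open>x \<noteq> 0\<close> have "r \<noteq> 0"
    by auto
  have "r *\<^sub>R y = (r - 1) *\<^sub>R x"
    using v by (simp add: algebra_simps eq_diff_eq)
  moreover have "y = (1 / r) *\<^sub>R (r *\<^sub>R y)"
    using \<open>r \<noteq> 0\<close> by simp
  ultimately have "y = ((r - 1) / r) *\<^sub>R x"
    by simp
  with assms(3,4) show False
    by (simp add: clinear_scaleR [OF T] cinner_scaleR_left cinner_scaleR_right)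
qed

lemma numerical_range_real_path:
  fixes T :: "'a::complex_inner_space \<Rightarrow> 'a"
  assumes T: "clinear T"
    and x: "norm x = 1" "cinner (T x) x = 0"
    and y: "norm y = 1" "cinner (T y) y = 1"
    and real: "Im (cinner (T x) y + cinner (T y) x) = 0"
    and t: "0 \<le> t" "t \<le> 1"
  shows "of_real t \<in> numerical_range T"
proof -
  define c where "c = Re (cinner (T x) y + cinner (T y) x)"
  define v where "v r = (1 - r) *\<^sub>R x + r *\<^sub>R y" for r :: real
  have form: "cinner (T (v r)) (v r) = of_real ((1 - r) * r * c + r\<^sup>2)" for r
  proof -
    have "cinner (T (v r)) (v r) = of_real ((1 - r) * (1 - r)) * cinner (T x) x
        + of_real ((1 - r) * r) * (cinner (T x) y + cinner (T y) x) + of_real (r * r) * cinner (T y) y"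
      unfolding v_def clinear_add [OF T] clinear_scaleR [OF T] cinner_add_left cinner_add_right
        cinner_scaleR_left cinner_scaleR_right
      by (simp add: algebra_simps)
    then show ?thesis
      using x y real by (simp add: complex_eq_iff c_def power2_eq_square)
  qed
  have v_nonzero: "v r \<noteq> 0" for r
    unfolding v_def using x y by (intro combination_neq_zero_of_isotropic [OF T]) auto
  define f where "f r = ((1 - r) * r * c + r\<^sup>2) / (norm (v r))\<^sup>2" for r
  have "continuous_on {0..1} f"
    unfolding f_def v_def using v_nonzero [unfolded v_def]
    by (intro continuous_intros) simp
  moreover have "f 0 = 0" "f 1 = 1"
    using y by (simp_all add: f_def v_def)
  ultimately obtain r where r: "0 \<le> r" "r \<le> 1" "f r = t"
    using IVT' [of f 0 t 1] t by auto
  define w where "w = (1 / norm (v r)) *\<^sub>R v r"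
  have "norm w = 1"
    using v_nonzero [of r] by (simp add: w_def)
  moreover have "cinner (T w) w = of_real ((1 / norm (v r))\<^sup>2 * ((1 - r) * r * c + r\<^sup>2))"
    by (simp add: w_def clinear_scaleR [OF T] cinner_scaleR_left cinner_scaleR_right form
        power2_eq_square)
  moreover have "(1 / norm (v r))\<^sup>2 * ((1 - r) * r * c + r\<^sup>2) = t"
    using r(3) by (simp add: f_def power_one_over)
  ultimately show ?thesis
    by (force simp: numerical_range_def)
qed

lemma numerical_range_unit_interval:
  fixes T :: "'a::complex_inner_space \<Rightarrow> 'a"
  assumes T: "clinear T" and "0 \<in> numerical_range T" "1 \<in> numerical_range T"
    and "0 \<le> t" "t \<le> 1"
  shows "of_real t \<in> numerical_range T"
proof -
  obtain x y where x: "norm x = 1" "cinner (T x) x = 0" and y: "norm y = 1" "cinner (T y) y = 1"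
    using assms(2,3) by (auto simp: numerical_range_def)
  \<comment> \<open>Rotating x by \<open>\<mu>\<close> makes the cross term \<open>cinner (T x) y + cinner (T y) x\<close> real.\<close>
  define \<mu> where "\<mu> = cis (- Arg (cinner (T x) y - cnj (cinner (T y) x)))"
  have "cmod \<mu> = 1"
    by (simp add: \<mu>_def)
  with x have "norm (scaleC \<mu> x) = 1" "cinner (T (scaleC \<mu> x)) (scaleC \<mu> x) = 0"
    by (simp_all add: norm_scaleC clinear_scaleC [OF T] cinner_scaleC_left cinner_scaleC_right)
  moreover have "Im (cinner (T (scaleC \<mu> x)) y + cinner (T y) (scaleC \<mu> x)) = 0"
  proof -
    have "Im (cinner (T (scaleC \<mu> x)) y + cinner (T y) (scaleC \<mu> x))
        = Im (\<mu> * (cinner (T x) y - cnj (cinner (T y) x)))"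
      by (simp add: clinear_scaleC [OF T] cinner_scaleC_left cinner_scaleC_right algebra_simps)
    then show ?thesis
      by (simp only: \<mu>_def cis_minus_Arg_mult Im_complex_of_real)
  qed
  ultimately show ?thesis
    using numerical_range_real_path [OF T _ _ y] assms(4,5) by blast
qed

lemma convex_numerical_range:
  assumes "clinear A"
  shows "convex (numerical_range A)"
  unfolding convex_alt
proof (intro ballI allI impI)
  fix z1 z2 and u :: real
  assume z: "z1 \<in> numerical_range A" "z2 \<in> numerical_range A" and u: "0 \<le> u \<and> u \<le> 1"
  show "(1 - u) *\<^sub>R z1 + u *\<^sub>R z2 \<in> numerical_range A"
  proof (cases "z1 = z2")
    case True
    with z show ?thesis
      by (simp flip: scaleR_add_left)
  next
    case False
    define T where "T = (\<lambda>x. scaleC (1 / (z2 - z1)) (A x - scaleC z1 x))"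
    have range_T: "numerical_range T = (\<lambda>z. (z - z1) / (z2 - z1)) ` numerical_range A"
      unfolding T_def numerical_range_scaleC_sub by simp
    have "clinear T"
      unfolding T_def by (rule clinear_scaleC_sub [OF assms])
    moreover have "0 \<in> numerical_range T" "1 \<in> numerical_range T"
      using z False unfolding range_T by force+
    ultimately have "of_real u \<in> numerical_range T"
      using u by (intro numerical_range_unit_interval) auto
    then obtain z where "z \<in> numerical_range A" "of_real u = (z - z1) / (z2 - z1)"
      by (auto simp: range_T)
    moreover from this False have "z = (1 - u) *\<^sub>R z1 + u *\<^sub>R z2"
      by (simp add: scaleR_conv_of_real field_simps)
    ultimately show ?thesis
      by simp
  qed
qed

section \<open>Operators with numerical range in a rectangle\<close>

lemma parallelogram_law:
  "(norm (x + y))\<^sup>2 + (norm (x - y))\<^sup>2 = 2 * (norm x)\<^sup>2 + 2 * (norm (y::'a::complex_inner_space))\<^sup>2"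
  by (simp add: Re_cinner_self [symmetric] cinner_add_left cinner_add_right cinner_diff_left
      cinner_diff_right)

lemma selfadjoint_polarization:
  assumes "is_adjoint H H"
  shows "4 * Re (cinner (H x) y) = Re (cinner (H (x + y)) (x + y)) - Re (cinner (H (x - y)) (x - y))"
proof -
  have H: "clinear H"
    using assms by (rule is_adjoint_clinear)
  have "cinner (H y) x = cnj (cinner (H x) y)"
    using assms unfolding is_adjoint_def by (metis cinner_commute)
  then have "Re (cinner (H y) x) = Re (cinner (H x) y)"
    by simp
  then show ?thesis
    by (simp add: clinear_add [OF H] clinear_diff [OF H] cinner_add_left cinner_add_right
        cinner_diff_left cinner_diff_right)
qed

lemma selfadjoint_norm_le:
  fixes H :: "'a::complex_inner_space \<Rightarrow> 'a"
  assumes H: "is_adjoint H H" and bound: "\<And>x. \<bar>Re (cinner (H x) x)\<bar> \<le> a * (norm x)\<^sup>2"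
  shows "norm (H x) \<le> a * norm x"
proof -
  have Re_le: "4 * Re (cinner (H x) y) \<le> 2 * a * ((norm x)\<^sup>2 + (norm y)\<^sup>2)" for y
  proof -
    have "4 * Re (cinner (H x) y) \<le> a * ((norm (x + y))\<^sup>2 + (norm (x - y))\<^sup>2)"
      using bound [of "x + y"] bound [of "x - y"] unfolding selfadjoint_polarization [OF H]
      by (simp add: distrib_left abs_le_iff)
    also have "\<dots> = 2 * a * ((norm x)\<^sup>2 + (norm y)\<^sup>2)"
      by (simp only: parallelogram_law) (simp add: algebra_simps)
    finally show ?thesis .
  qed
  show ?thesis
  proof (cases "x = 0 \<or> H x = 0")
    case True
    have "0 \<le> a * (norm x)\<^sup>2"
      using bound [of x] by linarith
    then have "0 \<le> a * norm x"
      by (cases "x = 0") (simp_all add: zero_le_mult_iff)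
    with True show ?thesis
      using clinear_zero [OF is_adjoint_clinear [OF H]] by auto
  next
    case False
    define y where "y = (norm x / norm (H x)) *\<^sub>R H x"
    have "Re (cinner (H x) y) = norm x * norm (H x)" "norm y = norm x"
      using False by (simp_all add: y_def cinner_scaleR_right Re_cinner_self power2_eq_square)
    with Re_le [of y] have "norm x * norm (H x) \<le> norm x * (a * norm x)"
      by (simp add: power2_eq_square algebra_simps)
    with False show ?thesis
      by simp
  qed
qed

lemma cinner_self_bounds:
  fixes B :: "'a::complex_inner_space \<Rightarrow> 'a"
  assumes B: "clinear B"
    and box: "\<And>z. z \<in> numerical_range B \<Longrightarrow> \<bar>Re z\<bar> \<le> a \<and> \<bar>Im z\<bar> \<le> b"
  shows "\<bar>Re (cinner (B x) x)\<bar> \<le> a * (norm x)\<^sup>2" and "\<bar>Im (cinner (B x) x)\<bar> \<le> b * (norm x)\<^sup>2"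
proof -
  have "\<bar>Re (cinner (B x) x)\<bar> \<le> a * (norm x)\<^sup>2 \<and> \<bar>Im (cinner (B x) x)\<bar> \<le> b * (norm x)\<^sup>2"
  proof (cases "x = 0")
    case True
    then show ?thesis
      using clinear_zero [OF B] by simp
  next
    case False
    then obtain z where z: "z \<in> numerical_range B" "cinner (B x) x = of_real ((norm x)\<^sup>2) * z"
      using cinner_self_in_numerical_range [OF B] by blast
    then show ?thesis
      using box [OF z(1)] by (simp add: abs_mult mult.commute mult_right_mono)
  qed
  then show "\<bar>Re (cinner (B x) x)\<bar> \<le> a * (norm x)\<^sup>2" "\<bar>Im (cinner (B x) x)\<bar> \<le> b * (norm x)\<^sup>2"
    by simp_all
qed

lemma cartesian_decomposition:
  fixes B Bs :: "'a::complex_inner_space \<Rightarrow> 'a"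
  assumes adj: "is_adjoint B Bs"
  obtains H K where "is_adjoint H H" "is_adjoint K K"
    and "\<And>u. Re (cinner (H u) u) = Re (cinner (B u) u)" "\<And>u. Re (cinner (K u) u) = Im (cinner (B u) u)"
    and "\<And>x y. cinner (Bs (B x) - B (Bs x)) y = 2 * \<i> * (cinner (K x) (H y) - cinner (H x) (K y))"
proof
  define H where "H u = scaleC (1/2) (B u + Bs u)" for u
  define K where "K u = scaleC (- \<i>/2) (B u - Bs u)" for u
  have adj': "is_adjoint Bs B"
    using adj by (rule is_adjoint_sym)
  show "is_adjoint H H" "is_adjoint K K"
    using adj adj' by (simp_all add: is_adjoint_def H_def K_def cinner_scaleC_left cinner_scaleC_right
        cinner_add_left cinner_add_right cinner_diff_left cinner_diff_right algebra_simps)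
  show "Re (cinner (H u) u) = Re (cinner (B u) u)" "Re (cinner (K u) u) = Im (cinner (B u) u)" for u
    using adj by (simp_all add: is_adjoint_def H_def K_def cinner_scaleC_left cinner_add_left
        cinner_diff_left cinner_commute [of u "Bs u"])
  fix x y
  have "cinner (Bs (B x) - B (Bs x)) y = cinner (B x) (B y) - cinner (Bs x) (Bs y)"
    using adj by (rule cinner_commutator)
  also have "\<dots> = 2 * \<i> * (cinner (K x) (H y) - cinner (H x) (K y))"
    by (simp add: H_def K_def cinner_scaleC_left cinner_scaleC_right cinner_add_left cinner_add_right
        cinner_diff_left cinner_diff_right algebra_simps)
  finally show "cinner (Bs (B x) - B (Bs x)) y = 2 * \<i> * (cinner (K x) (H y) - cinner (H x) (K y))" .
qed

lemma onorm_commutator_le: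
  fixes B Bs :: "'a::complex_inner_space \<Rightarrow> 'a"
  assumes adj: "is_adjoint B Bs"
    and box: "\<And>z. z \<in> numerical_range B \<Longrightarrow> \<bar>Re z\<bar> \<le> a \<and> \<bar>Im z\<bar> \<le> b"
    and "0 \<le> a" "0 \<le> b"
  shows "onorm (\<lambda>x. Bs (B x) - B (Bs x)) \<le> 4 * a * b"
proof (rule onorm_bound)
  show "0 \<le> 4 * a * b"
    using assms(3,4) by simp
  have B: "clinear B"
    using is_adjoint_clinear [OF is_adjoint_sym [OF adj]] .
  obtain H K where "is_adjoint H H" "is_adjoint K K"
    and Re_H: "\<And>u. Re (cinner (H u) u) = Re (cinner (B u) u)"
    and Re_K: "\<And>u. Re (cinner (K u) u) = Im (cinner (B u) u)"
    and commutator: "\<And>x y. cinner (Bs (B x) - B (Bs x)) y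
      = 2 * \<i> * (cinner (K x) (H y) - cinner (H x) (K y))"
    using cartesian_decomposition [OF adj] by blast
  have H_le: "norm (H u) \<le> a * norm u" and K_le: "norm (K u) \<le> b * norm u" for u
    using \<open>is_adjoint H H\<close> \<open>is_adjoint K K\<close>
    by (simp_all add: selfadjoint_norm_le Re_H Re_K cinner_self_bounds [OF B box])
  fix x
  have "cmod (cinner (Bs (B x) - B (Bs x)) y) \<le> (4 * a * b * norm x) * norm y" for y
  proof -
    have "cmod (cinner (Bs (B x) - B (Bs x)) y)
        \<le> 2 * (norm (K x) * norm (H y) + norm (H x) * norm (K y))"
      unfolding commutator using norm_triangle_ineq4 [of "cinner (K x) (H y)" "cinner (H x) (K y)"]
        cinner_cauchy_schwarz [of "K x" "H y"] cinner_cauchy_schwarz [of "H x" "K y"]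
      by (simp add: norm_mult)
    also have "\<dots> \<le> 2 * (b * norm x * (a * norm y) + a * norm x * (b * norm y))"
      using H_le K_le assms(3,4) by (intro mult_left_mono add_mono mult_mono) simp_all
    finally show ?thesis
      by (simp add: algebra_simps)
  qed
  then show "norm (Bs (B x) - B (Bs x)) \<le> 4 * a * b * norm x"
    using assms(3,4) by (intro norm_le_if_cinner_le) simp_all
qed

section \<open>Ellipses\<close>

lemma ellipse_foci_iff:
  fixes w :: complex and a b c :: real
  assumes "0 \<le> c" "c < a" and b: "b\<^sup>2 = a\<^sup>2 - c\<^sup>2"
  shows "cmod (w + of_real c) + cmod (w - of_real c) \<le> 2 * a
           \<longleftrightarrow> b\<^sup>2 * (Re w)\<^sup>2 + a\<^sup>2 * (Im w)\<^sup>2 \<le> a\<^sup>2 * b\<^sup>2"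
proof -
  define p q where "p = cmod (w + of_real c)" and "q = cmod (w - of_real c)"
  define D where "D = a\<^sup>2 * b\<^sup>2 - (b\<^sup>2 * (Re w)\<^sup>2 + a\<^sup>2 * (Im w)\<^sup>2)"
  \<comment> \<open>\<open>16D = (4a^2 - (p + q)^2) (4a^2 - (p - q)^2)\<close>, and the second factor is positive because
    \<open>|p - q| \<le> 2c < 2a\<close>; hence \<open>p + q \<le> 2a\<close> iff \<open>D \<ge> 0\<close>.\<close>
  have "p\<^sup>2 = (Re w + c)\<^sup>2 + (Im w)\<^sup>2" "q\<^sup>2 = (Re w - c)\<^sup>2 + (Im w)\<^sup>2"
    by (simp_all add: p_def q_def cmod_power2)
  then have key: "(4 * a\<^sup>2 - (p + q)\<^sup>2) * (4 * a\<^sup>2 - (p - q)\<^sup>2) = 16 * D"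
    unfolding D_def b by algebra
  have "\<bar>p - q\<bar> \<le> 2 * c"
    using norm_triangle_ineq3 [of "w + of_real c" "w - of_real c"] assms(1) by (simp add: p_def q_def)
  then have "(p - q)\<^sup>2 < (2 * a)\<^sup>2"
    using assms(1,2) abs_le_square_iff [of "p - q" "2 * c"] power_strict_mono [of "2 * c" "2 * a" 2]
    by simp
  then have "0 \<le> 4 * a\<^sup>2 - (p + q)\<^sup>2 \<longleftrightarrow> 0 \<le> (4 * a\<^sup>2 - (p + q)\<^sup>2) * (4 * a\<^sup>2 - (p - q)\<^sup>2)"
    by (simp add: zero_le_mult_iff power_mult_distrib)
  also have "\<dots> \<longleftrightarrow> 0 \<le> D"
    unfolding key by simp
  finally have sign: "0 \<le> 4 * a\<^sup>2 - (p + q)\<^sup>2 \<longleftrightarrow> 0 \<le> D" .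
  have "0 \<le> p + q" "0 < a"
    using assms(1,2) by (simp_all add: p_def q_def)
  then have "p + q \<le> 2 * a \<longleftrightarrow> (p + q)\<^sup>2 \<le> 4 * a\<^sup>2"
    using abs_le_square_iff [of "p + q" "2 * a"] by (simp add: power_mult_distrib)
  with sign show ?thesis
    unfolding D_def p_def q_def by linarith
qed

lemma norm_foci_rotated:
  fixes u v z :: complex
  defines "\<omega> \<equiv> cis (Arg (v - u))" and "m \<equiv> (u + v) / 2" and "c \<equiv> cmod (v - u) / 2"
  shows "cmod (z - u) = cmod (cnj \<omega> * (z - m) + of_real c)"
    and "cmod (z - v) = cmod (cnj \<omega> * (z - m) - of_real c)"
proof -
  have \<omega>: "cmod \<omega> = 1" "\<omega> * cnj \<omega> = 1"
    using complex_norm_square [of \<omega>] by (simp_all add: \<omega>_def)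
  have \<omega>c: "\<omega> * of_real c = (v - u) / 2"
    using rcis_cmod_Arg [of "v - u"] by (simp add: \<omega>_def c_def rcis_def mult.commute)
  have "\<omega> * (cnj \<omega> * (z - m) + of_real c) = (\<omega> * cnj \<omega>) * (z - m) + \<omega> * of_real c"
    "\<omega> * (cnj \<omega> * (z - m) - of_real c) = (\<omega> * cnj \<omega>) * (z - m) - \<omega> * of_real c"
    by (simp_all add: algebra_simps)
  moreover have "(\<omega> * cnj \<omega>) * (z - m) + \<omega> * of_real c = z - u"
    "(\<omega> * cnj \<omega>) * (z - m) - \<omega> * of_real c = z - v"
    unfolding \<omega>(2) \<omega>c by (simp_all add: m_def field_simps)
  ultimately have "z - u = \<omega> * (cnj \<omega> * (z - m) + of_real c)"
    "z - v = \<omega> * (cnj \<omega> * (z - m) - of_real c)"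
    by (simp_all only:)
  then show "cmod (z - u) = cmod (cnj \<omega> * (z - m) + of_real c)"
    "cmod (z - v) = cmod (cnj \<omega> * (z - m) - of_real c)"
    by (simp_all only: norm_mult \<omega>(1) mult_1)
qed

lemma ellipse_foci_normal_form:
  fixes f1 f2 :: complex and a :: real
  assumes "cmod (f1 - f2) < 2 * a"
  obtains \<omega> b m where "cmod \<omega> = 1" "0 < b"
    "elliptical_disc f1 f2 a
       = {z. b\<^sup>2 * (Re (cnj \<omega> * (z - m)))\<^sup>2 + a\<^sup>2 * (Im (cnj \<omega> * (z - m)))\<^sup>2 \<le> a\<^sup>2 * b\<^sup>2}"
proof -
  define \<omega> m c where "\<omega> = cis (Arg (f2 - f1))" and "m = (f1 + f2) / 2" and "c = cmod (f2 - f1) / 2"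
  define b where "b = sqrt (a\<^sup>2 - c\<^sup>2)"
  have c: "0 \<le> c" "c < a"
    using assms by (simp_all add: c_def norm_minus_commute)
  then have "c\<^sup>2 < a\<^sup>2"
    by (simp add: power_strict_mono)
  then have b: "b\<^sup>2 = a\<^sup>2 - c\<^sup>2" "0 < b"
    by (simp_all add: b_def)
  have "elliptical_disc f1 f2 a
      = {z. b\<^sup>2 * (Re (cnj \<omega> * (z - m)))\<^sup>2 + a\<^sup>2 * (Im (cnj \<omega> * (z - m)))\<^sup>2 \<le> a\<^sup>2 * b\<^sup>2}"
  proof -
    have "cmod (z - f1) + cmod (z - f2) \<le> 2 * a
        \<longleftrightarrow> b\<^sup>2 * (Re (cnj \<omega> * (z - m)))\<^sup>2 + a\<^sup>2 * (Im (cnj \<omega> * (z - m)))\<^sup>2 \<le> a\<^sup>2 * b\<^sup>2" for z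
      unfolding norm_foci_rotated [where u = f1 and v = f2 and z = z] \<omega>_def m_def
      by (rule ellipse_foci_iff [OF c b(1), unfolded c_def])
    then show ?thesis
      by (simp only: elliptical_disc_def)
  qed
  then show ?thesis
    using b(2) by (intro that [of \<omega> b m]) (simp_all add: \<omega>_def)
qed

lemma ellipse_subset_box:
  fixes a b :: real and w :: complex
  assumes "0 < a" "0 < b" and "b\<^sup>2 * (Re w)\<^sup>2 + a\<^sup>2 * (Im w)\<^sup>2 \<le> a\<^sup>2 * b\<^sup>2"
  shows "\<bar>Re w\<bar> \<le> a \<and> \<bar>Im w\<bar> \<le> b"
proof -
  have "0 \<le> a\<^sup>2 * (Im w)\<^sup>2" "0 \<le> b\<^sup>2 * (Re w)\<^sup>2"
    by simp_all
  then have "b\<^sup>2 * (Re w)\<^sup>2 \<le> b\<^sup>2 * a\<^sup>2" "a\<^sup>2 * (Im w)\<^sup>2 \<le> a\<^sup>2 * b\<^sup>2"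
    using assms(3) mult.commute [of "a\<^sup>2" "b\<^sup>2"] by linarith+
  then show ?thesis
    using assms(1,2) abs_le_square_iff [of "Re w" a] abs_le_square_iff [of "Im w" b] by simp
qed

section \<open>The area of an ellipse\<close>

lemma measurable_Complex_pair: "(\<lambda>(x, y). Complex x y) \<in> borel_measurable borel"
proof -
  have "(\<lambda>(x, y). Complex x y) = (\<lambda>p. of_real (fst p) + \<i> * of_real (snd p))"
    by (auto simp: complex_eq_iff)
  then show ?thesis
    by (simp add: borel_measurable_continuous_onI continuous_intros)
qed

lemma lborel_complex_eq_distr_pair:
  "lborel = distr (lborel :: (real \<times> real) measure) borel (\<lambda>(x, y). Complex x y)"
proof (rule lborel_eqI)
  fix l u :: complex
  assume le: "\<And>b. b \<in> Basis \<Longrightarrow> l \<bullet> b \<le> u \<bullet> b"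
  have "Re l \<le> Re u" "Im l \<le> Im u"
    using le [of 1] le [of \<i>] by (auto simp: Basis_complex_def)
  have "(\<lambda>(x, y). Complex x y) -` box l u = box (Re l, Im l) (Re u, Im u)"
    by (auto simp: in_box_complex_iff box_prod)
  then have "emeasure (distr lborel borel (\<lambda>(x, y). Complex x y)) (box l u)
      = emeasure lborel (box (Re l, Im l) (Re u, Im u))"
    by (simp add: emeasure_distr measurable_Complex_pair)
  also have "\<dots> = (\<Prod>b\<in>Basis. (u - l) \<bullet> b)"
    using \<open>Re l \<le> Re u\<close> \<open>Im l \<le> Im u\<close>
    by (subst emeasure_lborel_box) (auto simp: Basis_prod_def inner_prod_def Basis_complex_def)
  finally show "emeasure (distr lborel borel (\<lambda>(x, y). Complex x y)) (box l u)
      = (\<Prod>b\<in>Basis. (u - l) \<bullet> b)" .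
qed simp

lemma emeasure_complex_vimage_pair:
  "S \<in> sets borel \<Longrightarrow> emeasure lborel S = emeasure lborel ((\<lambda>(x, y). Complex x y) -` S)"
  by (subst lborel_complex_eq_distr_pair) (simp add: emeasure_distr measurable_Complex_pair)

lemma emeasure_lborel_translate:
  fixes m :: "'a::euclidean_space"
  assumes "S \<in> sets borel"
  shows "emeasure lborel ((\<lambda>z. m + z) -` S) = emeasure lborel S"
proof -
  have "emeasure lborel S = emeasure (distr lborel borel ((+) m)) S"
    by (simp add: lborel_distr_plus)
  also have "\<dots> = emeasure lborel ((+) m -` S)"
    by (simp add: emeasure_distr assms)
  finally show ?thesis
    by simp
qed

lemma emeasure_lborel_shear:
  fixes t :: real
  assumes X: "X \<in> sets borel"
  shows "emeasure lborel ((\<lambda>(x, y). (x, y + t * x)) -` X)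
           = emeasure (lborel :: (real \<times> real) measure) X"
proof -
  let ?s = "\<lambda>(x::real, y::real). (x, y + t * x)"
  have "?s \<in> borel_measurable borel"
    by (intro borel_measurable_continuous_onI) (simp add: case_prod_beta' continuous_intros)
  then have X': "?s -` X \<in> sets borel"
    using X by (simp add: measurable_sets_borel)
  have slice: "Pair x -` X \<in> sets borel" for x
  proof -
    have "Pair x \<in> borel_measurable (borel :: real measure)"
      by (intro borel_measurable_continuous_onI continuous_intros)
    from measurable_sets_borel [OF this X] show ?thesis .
  qed
  have "emeasure lborel (Pair x -` (?s -` X)) = emeasure lborel (Pair x -` X)" for x
  proof -
    have "Pair x -` (?s -` X) = (\<lambda>y. t * x + y) -` (Pair x -` X)"
      by (auto simp: add.commute)
    then show ?thesis
      using emeasure_lborel_translate [OF slice] by simp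
  qed
  then have "(\<integral>\<^sup>+ x. emeasure lborel (Pair x -` (?s -` X)) \<partial>lborel)
      = (\<integral>\<^sup>+ x. emeasure lborel (Pair x -` X) \<partial>lborel)"
    by simp
  moreover have "emeasure (lborel \<Otimes>\<^sub>M lborel) Y = (\<integral>\<^sup>+ x. emeasure lborel (Pair x -` Y) \<partial>lborel)"
    if "Y \<in> sets borel" for Y :: "(real \<times> real) set"
    using that by (intro lborel.emeasure_pair_measure_alt) (unfold lborel_prod, simp)
  ultimately show ?thesis
    using X X' by (simp flip: lborel_prod)
qed

lemma emeasure_lborel_axis_ellipse:
  fixes \<alpha> \<beta> :: real
  assumes "0 < \<alpha>" "0 < \<beta>"
  shows "emeasure lborel {(x, y). (x / \<alpha>)\<^sup>2 + (y / \<beta>)\<^sup>2 < (1::real)} = ennreal (pi * \<alpha> * \<beta>)"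
proof -
  define c :: "real \<times> real \<Rightarrow> real" where "c j = (if j = (1, 0) then 1 / \<alpha> else 1 / \<beta>)" for j
  define T where "T x = (0::real \<times> real) + (\<Sum>j\<in>Basis. (c j * (x \<bullet> j)) *\<^sub>R j)" for x
  have T: "T = (\<lambda>(x, y). (x / \<alpha>, y / \<beta>))"
    by (auto simp: fun_eq_iff T_def c_def Basis_prod_def)
  have "lborel = density (distr lborel borel T) (\<lambda>_. (\<Prod>j\<in>Basis. \<bar>c j\<bar>))"
    unfolding T_def using assms by (intro lborel_affine_euclidean) (auto simp: c_def)
  also have "(\<Prod>j\<in>Basis. \<bar>c j\<bar>) = 1 / (\<alpha> * \<beta>)"
    using assms by (simp add: c_def Basis_prod_def)
  finally have lborel_eq: "lborel = density (distr lborel borel T) (\<lambda>_. ennreal (1 / (\<alpha> * \<beta>)))" .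
  have T_measurable: "T \<in> borel_measurable borel"
    unfolding T using assms
    by (intro borel_measurable_continuous_onI) (auto simp: case_prod_beta' intro!: continuous_intros)
  have "ennreal pi = emeasure lborel (ball (0::real \<times> real) 1)"
    by (simp add: emeasure_ball unit_ball_vol_2)
  also have "\<dots> = emeasure (density (distr lborel borel T) (\<lambda>_. ennreal (1 / (\<alpha> * \<beta>)))) (ball 0 1)"
    by (subst lborel_eq) simp
  also have "\<dots> = ennreal (1 / (\<alpha> * \<beta>)) * emeasure lborel (T -` ball 0 1)"
    by (simp add: emeasure_density nn_integral_cmult_indicator emeasure_distr T_measurable)
  also have "T -` ball 0 1 = {(x, y). (x / \<alpha>)\<^sup>2 + (y / \<beta>)\<^sup>2 < (1::real)}"
    by (auto simp: T dist_norm norm_Pair power_divide)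
  finally have "ennreal pi
      = ennreal (1 / (\<alpha> * \<beta>)) * emeasure lborel {(x, y). (x / \<alpha>)\<^sup>2 + (y / \<beta>)\<^sup>2 < (1::real)}" .
  then have "ennreal (\<alpha> * \<beta>) * ennreal pi
      = emeasure lborel {(x, y). (x / \<alpha>)\<^sup>2 + (y / \<beta>)\<^sup>2 < (1::real)}"
    using assms by (simp add: mult.assoc [symmetric] flip: ennreal_mult')
  then show ?thesis
    using assms by (simp add: ennreal_mult' mult.commute mult.left_commute)
qed

lemma tilted_ellipse_complete_square:
  fixes p q a b x y :: real
  assumes pq: "p\<^sup>2 + q\<^sup>2 = 1" and "0 < a" "0 < b"
  defines "g \<equiv> b\<^sup>2 * q\<^sup>2 + a\<^sup>2 * p\<^sup>2" and "h \<equiv> p * q * (b\<^sup>2 - a\<^sup>2)"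
  shows "0 < g"
    and "(b\<^sup>2 * (p * x + q * y)\<^sup>2 + a\<^sup>2 * (p * y - q * x)\<^sup>2) / (a\<^sup>2 * b\<^sup>2)
           = (x / sqrt g)\<^sup>2 + ((y + h / g * x) / (a * b / sqrt g))\<^sup>2"
proof -
  show "0 < g"
  proof (cases "p = 0")
    case True
    with pq \<open>0 < b\<close> show ?thesis
      by (simp add: g_def)
  next
    case False
    with \<open>0 < a\<close> show ?thesis
      by (simp add: g_def add_nonneg_pos)
  qed
  define Q where "Q = b\<^sup>2 * (p * x + q * y)\<^sup>2 + a\<^sup>2 * (p * y - q * x)\<^sup>2"
  have "g * Q - (a\<^sup>2 * b\<^sup>2 * x\<^sup>2 + (g * y + h * x)\<^sup>2) = a\<^sup>2 * b\<^sup>2 * x\<^sup>2 * ((p\<^sup>2 + q\<^sup>2)\<^sup>2 - 1)"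
    unfolding g_def h_def Q_def by algebra
  with pq have gQ: "g * Q = a\<^sup>2 * b\<^sup>2 * x\<^sup>2 + (g * y + h * x)\<^sup>2"
    by simp
  have "(u / (a * b / sqrt g))\<^sup>2 = u\<^sup>2 * g / (a\<^sup>2 * b\<^sup>2)" for u
    using \<open>0 < g\<close> by (simp add: power_divide power_mult_distrib)
  moreover have "(x / sqrt g)\<^sup>2 = x\<^sup>2 / g"
    using \<open>0 < g\<close> by (simp add: power_divide)
  ultimately have "(x / sqrt g)\<^sup>2 + ((y + h / g * x) / (a * b / sqrt g))\<^sup>2
      = x\<^sup>2 / g + (y + h / g * x)\<^sup>2 * g / (a\<^sup>2 * b\<^sup>2)"
    by (simp only:)
  also have "\<dots> = g * Q / (g * (a\<^sup>2 * b\<^sup>2))"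
    unfolding gQ using \<open>0 < g\<close> assms(2,3) by (simp add: field_simps power2_eq_square)
  finally show "Q / (a\<^sup>2 * b\<^sup>2) = (x / sqrt g)\<^sup>2 + ((y + h / g * x) / (a * b / sqrt g))\<^sup>2"
    using \<open>0 < g\<close> by simp
qed

lemma emeasure_lborel_ellipse:
  fixes \<omega> m :: complex and a b :: real
  assumes "cmod \<omega> = 1" "0 < a" "0 < b"
  shows "emeasure lborel
           {z. b\<^sup>2 * (Re (cnj \<omega> * (z - m)))\<^sup>2 + a\<^sup>2 * (Im (cnj \<omega> * (z - m)))\<^sup>2 < a\<^sup>2 * b\<^sup>2}
         = ennreal (pi * a * b)"
proof -
  define p q where "p = Re \<omega>" and "q = Im \<omega>"
  define S where "S = {w. b\<^sup>2 * (p * Re w + q * Im w)\<^sup>2 + a\<^sup>2 * (p * Im w - q * Re w)\<^sup>2 < a\<^sup>2 * b\<^sup>2}"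
  define g h where "g = b\<^sup>2 * q\<^sup>2 + a\<^sup>2 * p\<^sup>2" and "h = p * q * (b\<^sup>2 - a\<^sup>2)"
  define G where "G = {(x, y). (x / sqrt g)\<^sup>2 + (y / (a * b / sqrt g))\<^sup>2 < (1::real)}"
  have "p\<^sup>2 + q\<^sup>2 = 1"
    using assms(1) by (simp add: p_def q_def cmod_power2 [symmetric])
  \<comment> \<open>Completing the square in y exhibits the tilted ellipse as a shear of an axis-parallel one.\<close>
  note square = tilted_ellipse_complete_square [OF this assms(2,3), folded g_def h_def]
  have "S \<in> sets borel"
    unfolding S_def by (intro borel_open open_Collect_less continuous_intros)
  have "G \<in> sets borel"
    unfolding G_def case_prod_beta' using square(1) assms(2,3)
    by (intro borel_open open_Collect_less continuous_intros) auto
  have "{z. b\<^sup>2 * (Re (cnj \<omega> * (z - m)))\<^sup>2 + a\<^sup>2 * (Im (cnj \<omega> * (z - m)))\<^sup>2 < a\<^sup>2 * b\<^sup>2}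
      = (\<lambda>z. - m + z) -` S"
    by (auto simp: S_def p_def q_def algebra_simps)
  also have "emeasure lborel \<dots> = emeasure lborel ((\<lambda>(x, y). Complex x y) -` S)"
    using emeasure_lborel_translate [OF \<open>S \<in> sets borel\<close>, of "- m"]
      emeasure_complex_vimage_pair [OF \<open>S \<in> sets borel\<close>]
    by simp
  also have "(\<lambda>(x, y). Complex x y) -` S = (\<lambda>(x, y). (x, y + h / g * x)) -` G"
  proof -
    have "b\<^sup>2 * (p * x + q * y)\<^sup>2 + a\<^sup>2 * (p * y - q * x)\<^sup>2 < a\<^sup>2 * b\<^sup>2
        \<longleftrightarrow> (x / sqrt g)\<^sup>2 + ((y + h / g * x) / (a * b / sqrt g))\<^sup>2 < 1" for x y
      unfolding square(2) [symmetric] using assms(2,3) by (simp add: divide_less_eq)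
    then show ?thesis
      by (auto simp: S_def G_def)
  qed
  also have "emeasure lborel \<dots> = emeasure lborel G"
    by (rule emeasure_lborel_shear [OF \<open>G \<in> sets borel\<close>])
  also have "\<dots> = ennreal (pi * sqrt g * (a * b / sqrt g))"
    unfolding G_def using square(1) assms(2,3) by (intro emeasure_lborel_axis_ellipse) simp_all
  finally show ?thesis
    using square(1) by (simp add: mult.assoc)
qed

section \<open>Elliptical numerical ranges\<close>

lemma measure_le_convex_of_open_subset_closure:
  fixes U W :: "'a::euclidean_space set"
  assumes "convex W" "bounded W" "open U" "U \<subseteq> closure W"
  shows "measure lebesgue U \<le> measure lebesgue W"
proof (rule measure_mono_fmeasurable)
  have "U \<subseteq> interior (closure W)"
    by (simp add: interior_maximal assms(3,4))
  then show "U \<subseteq> W"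
    using convex_interior_closure [OF assms(1)] interior_subset by blast
  show "U \<in> sets lebesgue"
    using assms(3) by simp
  show "W \<in> fmeasurable lebesgue"
    using assms(1,2) by (rule measurable_convex)
qed

lemma bounded_elliptical_disc: "bounded (elliptical_disc f1 f2 a)"
proof (rule bounded_subset [OF bounded_cball])
  show "elliptical_disc f1 f2 a \<subseteq> cball f1 (2 * a)"
  proof
    fix z
    assume "z \<in> elliptical_disc f1 f2 a"
    then have "cmod (z - f1) + cmod (z - f2) \<le> 2 * a"
      by (simp add: elliptical_disc_def)
    then have "cmod (z - f1) \<le> 2 * a"
      using norm_ge_zero [of "z - f2"] by linarith
    then show "z \<in> cball f1 (2 * a)"
      by (simp add: dist_norm norm_minus_commute)
  qed
qed

lemma onorm_commutator_le_ellipse: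
  fixes A As :: "'a::complex_inner_space \<Rightarrow> 'a"
  assumes adj: "is_adjoint A As" and \<omega>: "cmod \<omega> = 1" and "0 < a" "0 < b"
    and range: "\<And>z. z \<in> numerical_range A
      \<Longrightarrow> b\<^sup>2 * (Re (cnj \<omega> * (z - m)))\<^sup>2 + a\<^sup>2 * (Im (cnj \<omega> * (z - m)))\<^sup>2 \<le> a\<^sup>2 * b\<^sup>2"
  shows "onorm (\<lambda>x. As (A x) - A (As x)) \<le> 4 * a * b"
proof -
  define B where "B = (\<lambda>x. scaleC (cnj \<omega>) (A x - scaleC m x))"
  define Bs where "Bs = (\<lambda>x. scaleC (cnj (cnj \<omega>)) (As x - scaleC (cnj m) x))"
  have adj_B: "is_adjoint B Bs"
    unfolding B_def Bs_def using adj by (rule is_adjoint_scaleC_sub)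
  have range_B: "numerical_range B = (\<lambda>z. cnj \<omega> * (z - m)) ` numerical_range A"
    unfolding B_def by (rule numerical_range_scaleC_sub)
  have "\<bar>Re z\<bar> \<le> a \<and> \<bar>Im z\<bar> \<le> b" if z: "z \<in> numerical_range B" for z
  proof -
    obtain w where "w \<in> numerical_range A" "z = cnj \<omega> * (w - m)"
      using z unfolding range_B by blast
    then show ?thesis
      using ellipse_subset_box [OF \<open>0 < a\<close> \<open>0 < b\<close> range] by blast
  qed
  then have "onorm (\<lambda>x. Bs (B x) - B (Bs x)) \<le> 4 * a * b"
    using adj_B \<open>0 < a\<close> \<open>0 < b\<close> by (intro onorm_commutator_le) auto
  moreover have "Bs (B x) - B (Bs x) = As (A x) - A (As x)" for x
    unfolding B_def Bs_def using adj \<omega> by (intro commutator_scaleC_sub) simp_all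
  ultimately show ?thesis
    by simp
qed

lemma measure_convex_ge_ellipse:
  fixes W :: "complex set"
  assumes "convex W" "bounded W" and "cmod \<omega> = 1" "0 < a" "0 < b"
    and ellipse: "{z. b\<^sup>2 * (Re (cnj \<omega> * (z - m)))\<^sup>2 + a\<^sup>2 * (Im (cnj \<omega> * (z - m)))\<^sup>2 < a\<^sup>2 * b\<^sup>2}
      \<subseteq> closure W"
  shows "pi * a * b \<le> measure lebesgue W"
proof -
  let ?U = "{z. b\<^sup>2 * (Re (cnj \<omega> * (z - m)))\<^sup>2 + a\<^sup>2 * (Im (cnj \<omega> * (z - m)))\<^sup>2 < a\<^sup>2 * b\<^sup>2}"
  have "open ?U"
    by (intro open_Collect_less continuous_intros)
  then have "measure lebesgue ?U = pi * a * b"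
    using emeasure_lborel_ellipse [OF assms(3-5)] assms(4,5) by (simp add: measure_def)
  moreover have "measure lebesgue ?U \<le> measure lebesgue W"
    using assms(1,2) \<open>open ?U\<close> ellipse by (rule measure_le_convex_of_open_subset_closure)
  ultimately show ?thesis
    by simp
qed

theorem proposition5:
  fixes A Astar :: "'a::{complex_inner_space, complete_space} \<Rightarrow> 'a"
  assumes "bounded_clinear A"
    and "is_adjoint A Astar"
    and "elliptical (numerical_range A)"
  shows "onorm (\<lambda>x. Astar (A x) - A (Astar x))
           \<le> 4 / pi * measure lebesgue (numerical_range A)"
proof -
  let ?W = "numerical_range A"
  obtain f1 f2 a where foci: "cmod (f1 - f2) < 2 * a"
    and closure: "closure ?W = elliptical_disc f1 f2 a"
    using assms(3) unfolding elliptical_def by blast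
  then have "0 < a"
    using norm_ge_zero [of "f1 - f2"] by linarith
  obtain \<omega> b m where \<omega>: "cmod \<omega> = 1" and "0 < b"
    and disc: "closure ?W
      = {z. b\<^sup>2 * (Re (cnj \<omega> * (z - m)))\<^sup>2 + a\<^sup>2 * (Im (cnj \<omega> * (z - m)))\<^sup>2 \<le> a\<^sup>2 * b\<^sup>2}"
    unfolding closure by (rule ellipse_foci_normal_form [OF foci])
  have "onorm (\<lambda>x. Astar (A x) - A (Astar x)) \<le> 4 * a * b"
    using closure_subset [of ?W] unfolding disc
    by (intro onorm_commutator_le_ellipse [OF assms(2) \<omega> \<open>0 < a\<close> \<open>0 < b\<close>]) blast
  also have "\<dots> = 4 / pi * (pi * a * b)"
    by simp
  also have "\<dots> \<le> 4 / pi * measure lebesgue ?W"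
  proof (intro mult_left_mono measure_convex_ge_ellipse [OF _ _ \<omega> \<open>0 < a\<close> \<open>0 < b\<close>])
    show "convex ?W"
      using assms(1) by (simp add: bounded_clinear_def convex_numerical_range)
    show "bounded ?W"
      using bounded_elliptical_disc closure closure_subset bounded_subset by metis
    show "{z. b\<^sup>2 * (Re (cnj \<omega> * (z - m)))\<^sup>2 + a\<^sup>2 * (Im (cnj \<omega> * (z - m)))\<^sup>2 < a\<^sup>2 * b\<^sup>2}
        \<subseteq> closure ?W"
      unfolding disc by auto
  qed simp
  finally show ?thesis .
qed

end
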